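(* Let $(R,d)$ be a fusion algebra with a finite generating set $X\subseteq I$. Then $\omega_X(R,d)=\max\bigl(1,\lim_{n\to\infty}\sqrt[n]{|S_X(n)|}\bigr)$.
   Context: A fusion algebra $(R,d)$ consists of a set $I$ with distinguished $e$ and involution $\alpha\mapsto\bar\alpha$, a unital ring structure on $R=\mathbb{Z}[I]$ with unit $e$ and $\xi\eta=\sum_\alpha N^\alpha_{\xi,\eta}\alpha$, $N^\alpha_{\xi,\eta}\in\mathbb{Z}_{\ge0}$ finitely many nonzero, the involution extending to a $\mathbb{Z}$-linear antimultiplicative involution, Frobenius reciprocity $N^\alpha_{\xi,\eta}=N^\xi_{\alpha,\bar\eta}=N^\eta_{\bar\xi,\alpha}$, and $\mathbb{Z}$-linear multiplicative $d:R\to\mathbb{R}$ with $d(\bar\alpha)=d(\alpha)\ge1$ on $I$. Write $\alpha\subseteq r$ if $\alpha$ has nonzero coefficient in $r$. $|A|=\sum_{\alpha\in A}d(\alpha)^2$. A finite generating set is a finite $X\subseteq I$ with $\bar X=X$ such that every $\alpha\in I$ satisfies $\alpha\subseteq x_1\cdots x_n$ for some $x_i\in X$. $\ell_X(e)=0$, otherwise $\ell_X(\alpha)$ is the least $n\ge1$ with $\alpha\subseteq x_1\cdots x_n$, $x_i\in X$; $B_X(n)=\{\alpha:\ell_X(\alpha)\le n\}$, $S_X(n)=\{\alpha:\ell_X(\alpha)=n\}$. The exponential growth rate is $\omega_X(R,d)=\lim_{n\to\infty}|B_X(n)|^{1/n}$; both this limit and $\lim_n|S_X(n)|^{1/n}$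 exist (the latter equals $0$ when $I$ is finite). *)

theory Defs
  imports Complex_Main
begin

text \<open>Elements of R = Z[I] are represented as coefficient functions 'i => int
  (finitely supported in all uses).  Structure constants: N a x y = N^a_{x,y}.\<close>

definition supp :: "('i \<Rightarrow> int) \<Rightarrow> 'i set" where
  "supp r = {a. r a \<noteq> 0}"

definition basis :: "'i \<Rightarrow> 'i \<Rightarrow> int" where
  "basis a = (\<lambda>b. if b = a then 1 else 0)"

definition fmult :: "('i \<Rightarrow> 'i \<Rightarrow> 'i \<Rightarrow> nat) \<Rightarrow> ('i \<Rightarrow> int) \<Rightarrow> ('i \<Rightarrow> int) \<Rightarrow> 'i \<Rightarrow> int" where
  "fmult N r s = (\<lambda>a. \<Sum>x\<in>supp r. \<Sum>y\<in>supp s. r x * s y * int (N a x y))"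

fun word_prod :: "('i \<Rightarrow> 'i \<Rightarrow> 'i \<Rightarrow> nat) \<Rightarrow> 'i \<Rightarrow> 'i list \<Rightarrow> 'i \<Rightarrow> int" where
  "word_prod N e [] = basis e"
| "word_prod N e (x # xs) = fmult N (basis x) (word_prod N e xs)"

definition fusion_algebra ::
  "'i set \<Rightarrow> 'i \<Rightarrow> ('i \<Rightarrow> 'i) \<Rightarrow> ('i \<Rightarrow> 'i \<Rightarrow> 'i \<Rightarrow> nat) \<Rightarrow> ('i \<Rightarrow> real) \<Rightarrow> bool" where
  "fusion_algebra I e bar N d \<longleftrightarrow>
     e \<in> I \<and> (\<forall>a\<in>I. bar a \<in> I \<and> bar (bar a) = a)
   \<comment> \<open>structure constants live on I and have finite support\<close>
   \<and> (\<forall>a x y. N a x y \<noteq> 0 \<longrightarrow> a \<in> I \<and> x \<in> I \<and> y \<in> I)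
   \<and> (\<forall>x\<in>I. \<forall>y\<in>I. finite {a. N a x y \<noteq> 0})
   \<comment> \<open>e is a two-sided unit\<close>
   \<and> (\<forall>a\<in>I. \<forall>x\<in>I. N a e x = (if a = x then 1 else 0) \<and> N a x e = (if a = x then 1 else 0))
   \<comment> \<open>associativity\<close>
   \<and> (\<forall>a\<in>I. \<forall>x\<in>I. \<forall>y\<in>I. \<forall>z\<in>I.
        (\<Sum>b\<in>{b. N b x y \<noteq> 0}. N b x y * N a b z) = (\<Sum>b\<in>{b. N b y z \<noteq> 0}. N a x b * N b y z))
   \<comment> \<open>the involution is antimultiplicative: bar(x y) = bar y * bar x\<close>
   \<and> (\<forall>a\<in>I. \<forall>x\<in>I. \<forall>y\<in>I. N (bar a) (bar y) (bar x) = N a x y)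
   \<comment> \<open>Frobenius reciprocity\<close>
   \<and> (\<forall>a\<in>I. \<forall>x\<in>I. \<forall>y\<in>I. N a x y = N x a (bar y) \<and> N a x y = N y (bar x) a)
   \<comment> \<open>d: Z-linear (determined by values on I), multiplicative, d(bar a) = d a >= 1\<close>
   \<and> (\<forall>x\<in>I. \<forall>y\<in>I. d x * d y = (\<Sum>a\<in>{a. N a x y \<noteq> 0}. real (N a x y) * d a))
   \<and> (\<forall>a\<in>I. d (bar a) = d a \<and> d a \<ge> 1)"

definition finite_generating_set ::
  "'i set \<Rightarrow> 'i \<Rightarrow> ('i \<Rightarrow> 'i) \<Rightarrow> ('i \<Rightarrow> 'i \<Rightarrow> 'i \<Rightarrow> nat) \<Rightarrow> 'i set \<Rightarrow> bool" where
  "finite_generating_set I e bar N X \<longleftrightarrow>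
     finite X \<and> X \<subseteq> I \<and> bar ` X = X \<and>
     (\<forall>a\<in>I. \<exists>xs. set xs \<subseteq> X \<and> a \<in> supp (word_prod N e xs))"

definition word_length ::
  "'i \<Rightarrow> ('i \<Rightarrow> 'i \<Rightarrow> 'i \<Rightarrow> nat) \<Rightarrow> 'i set \<Rightarrow> 'i \<Rightarrow> nat" where
  "word_length e N X a = (if a = e then 0 else
     (LEAST n. n \<ge> 1 \<and> (\<exists>xs. length xs = n \<and> set xs \<subseteq> X \<and> a \<in> supp (word_prod N e xs))))"

definition ball_X :: "'i set \<Rightarrow> 'i \<Rightarrow> ('i \<Rightarrow> 'i \<Rightarrow> 'i \<Rightarrow> nat) \<Rightarrow> 'i set \<Rightarrow> nat \<Rightarrow> 'i set" where
  "ball_X I e N X n = {a\<in>I. word_length e N X a \<le> n}"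

definition sphere_X :: "'i set \<Rightarrow> 'i \<Rightarrow> ('i \<Rightarrow> 'i \<Rightarrow> 'i \<Rightarrow> nat) \<Rightarrow> 'i set \<Rightarrow> nat \<Rightarrow> 'i set" where
  "sphere_X I e N X n = {a\<in>I. word_length e N X a = n}"

text \<open>|A| = sum of d(a)^2 over A\<close>
definition dsize :: "('i \<Rightarrow> real) \<Rightarrow> 'i set \<Rightarrow> real" where
  "dsize d A = (\<Sum>a\<in>A. d a ^ 2)"

definition growth_rate ::
  "'i set \<Rightarrow> 'i \<Rightarrow> ('i \<Rightarrow> 'i \<Rightarrow> 'i \<Rightarrow> nat) \<Rightarrow> ('i \<Rightarrow> real) \<Rightarrow> 'i set \<Rightarrow> real" where
  "growth_rate I e N d X = lim (\<lambda>n. dsize d (ball_X I e N X n) powr (1 / real n))"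

end

theory Submission
  imports Defs "HOL-Real_Asymp.Real_Asymp"
begin

text \<open>Both \<open>|B(n)|\<close> and \<open>|S(n)|\<close> are submultiplicative in \<open>n\<close>: a word of length
  \<open>n + m\<close> splits into words of lengths \<open>n\<close> and \<open>m\<close>, and the constituents \<open>c\<close> of a
  product \<open>a b\<close> satisfy \<open>\<Sum> d(c)\<^sup>2 \<le> d(a)\<^sup>2 d(b)\<^sup>2\<close> since \<open>d\<close> is multiplicative
  and \<open>d \<ge> 1\<close>. By Fekete's lemma both \<open>n\<close>-th roots converge, to \<open>\<omega>\<close> and \<open>\<sigma>\<close> say.
  The unit lies in every ball, so \<open>\<omega> \<ge> 1\<close>; spheres lie in balls, so \<open>\<sigma> \<le> \<omega>\<close>.
  Finally \<open>|B(n)|\<close> is the sum of the \<open>|S(k)|\<close> for \<open>k \<le> n\<close>, each at most \<open>C t\<^sup>n\<close> for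
  any \<open>t > max 1 \<sigma>\<close>, and the factor \<open>n + 1\<close> disappears under the \<open>n\<close>-th root,
  whence \<open>\<omega> \<le> max 1 \<sigma>\<close>.\<close>

lemma submultiplicative_bound_below_Inf_root:
  fixes f :: "nat \<Rightarrow> real"
  assumes nonneg: "\<And>n. 0 \<le> f n"
    and submult: "\<And>n m. 1 \<le> n \<Longrightarrow> 1 \<le> m \<Longrightarrow> f (n + m) \<le> f n * f m"
    and less: "(INF n\<in>{1..}. f n powr (1 / real n)) < t"
  shows "\<exists>C>0. \<forall>n\<ge>1. f n \<le> C * t ^ n"
proof -
  have "bdd_below ((\<lambda>n. f n powr (1 / real n)) ` {1..})"
    by (rule bdd_belowI[of _ 0]) auto
  then have "\<exists>k\<in>{1..}. f k powr (1 / real k) < t"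
    using less by (subst (asm) cINF_less_iff) auto
  then obtain k where k: "1 \<le> k" and root_k: "f k powr (1 / real k) < t"
    by auto
  have t_pos: "0 < t"
    using root_k powr_ge_zero[of "f k" "1 / real k"] by linarith
  have f_k: "f k \<le> t ^ k"
  proof -
    have "f k = (f k powr (1 / real k)) ^ k"
      using nonneg[of k] k by (simp add: powr_realpow'[symmetric] powr_powr)
    also have "\<dots> \<le> t ^ k"
      using root_k by (intro power_mono) auto
    finally show ?thesis .
  qed
  \<comment> \<open>\<open>C\<close> covers \<open>1 \<le> n \<le> k\<close>; beyond that, peel off factors \<open>f k \<le> t\<^sup>k\<close>.\<close>
  define C where "C = (Max (f ` {1..k}) + 1) / min 1 (t ^ k)"
  have min_pos: "0 < min 1 (t ^ k)"
    using t_pos by simp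
  have initial: "f n \<le> C * min 1 (t ^ k)" if "n \<in> {1..k}" for n
  proof -
    have "f n \<le> Max (f ` {1..k})"
      using that by (intro Max_ge) auto
    then show ?thesis
      unfolding C_def using min_pos by simp
  qed
  have "f k \<le> Max (f ` {1..k})"
    using k by (intro Max_ge) auto
  then have C_pos: "0 < C"
    unfolding C_def using nonneg[of k] min_pos by (intro divide_pos_pos) auto
  have "f n \<le> C * t ^ n" if "1 \<le> n" for n
    using that
  proof (induction n rule: less_induct)
    case (less n)
    show ?case
    proof (cases "n \<le> k")
      case True
      have "min 1 (t ^ k) \<le> t ^ n"
        using t_pos True by (cases "t \<ge> 1") (auto simp: power_decreasing min.coboundedI2)
      then have "C * min 1 (t ^ k) \<le> C * t ^ n"
        using C_pos by (intro mult_left_mono) auto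
      then show ?thesis
        using initial[of n] less.prems True by fastforce
    next
      case False
      have "f n \<le> f k * f (n - k)"
        using submult[of k "n - k"] False k by simp
      also have "\<dots> \<le> t ^ k * (C * t ^ (n - k))"
        using less.IH[of "n - k"] False k nonneg f_k t_pos by (intro mult_mono) auto
      also have "\<dots> = C * t ^ n"
        using False by (simp add: power_add[symmetric])
      finally show ?thesis .
    qed
  qed
  then show ?thesis
    using C_pos by blast
qed

lemma submultiplicative_root_tendsto_Inf:
  fixes f :: "nat \<Rightarrow> real"
  assumes nonneg: "\<And>n. 0 \<le> f n"
    and submult: "\<And>n m. 1 \<le> n \<Longrightarrow> 1 \<le> m \<Longrightarrow> f (n + m) \<le> f n * f m"
  shows "(\<lambda>n. f n powr (1 / real n)) \<longlonglongrightarrow> (INF n\<in>{1..}. f n powr (1 / real n))"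
    (is "_ \<longlonglongrightarrow> ?s")
proof (rule order_tendstoI)
  have "bdd_below ((\<lambda>n. f n powr (1 / real n)) ` {1..})"
    by (rule bdd_belowI[of _ 0]) auto
  then have Inf_le: "?s \<le> f n powr (1 / real n)" if "1 \<le> n" for n
    using that by (intro cINF_lower) auto
  fix a
  assume "a < ?s"
  show "\<forall>\<^sub>F n in sequentially. a < f n powr (1 / real n)"
  proof (rule eventually_sequentiallyI[of 1])
    fix n :: nat
    assume "1 \<le> n"
    then show "a < f n powr (1 / real n)"
      using Inf_le[of n] \<open>a < ?s\<close> by linarith
  qed
next
  fix a
  assume "?s < a"
  define t where "t = (?s + a) / 2"
  have "?s < t" "t < a"
    using \<open>?s < a\<close> unfolding t_def by auto
  obtain C where C_pos: "C > 0" and bound: "\<forall>n\<ge>1. f n \<le> C * t ^ n"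
    using submultiplicative_bound_below_Inf_root[OF nonneg submult \<open>?s < t\<close>] by blast
  have "0 \<le> ?s"
    by (intro cINF_greatest) auto
  then have t_pos: "0 < t"
    using \<open>?s < t\<close> by simp
  have "(\<lambda>n. C powr (1 / real n) * t) \<longlonglongrightarrow> t"
    using C_pos by real_asymp
  then have "\<forall>\<^sub>F n in sequentially. C powr (1 / real n) * t < a"
    using \<open>t < a\<close> by (rule order_tendstoD)
  moreover have "\<forall>\<^sub>F n in sequentially. f n powr (1 / real n) \<le> C powr (1 / real n) * t"
    using eventually_ge_at_top[of 1]
  proof eventually_elim
    case (elim n)
    have "f n powr (1 / real n) \<le> (C * t ^ n) powr (1 / real n)"
      using bound elim nonneg by (intro powr_mono2) auto
    also have "\<dots> = C powr (1 / real n) * t"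
      using C_pos t_pos elim by (simp add: powr_mult powr_realpow[symmetric] powr_powr)
    finally show ?case .
  qed
  ultimately show "\<forall>\<^sub>F n in sequentially. f n powr (1 / real n) < a"
    by eventually_elim auto
qed

lemma root_partial_sums_limit_le:
  fixes f :: "nat \<Rightarrow> real"
  assumes nonneg: "\<And>n. 0 \<le> f n"
    and bound: "\<And>n. 1 \<le> n \<Longrightarrow> f n \<le> C * t ^ n" and "0 < C" "0 \<le> t"
    and lim: "(\<lambda>n. (\<Sum>k\<le>n. f k) powr (1 / real n)) \<longlonglongrightarrow> b"
  shows "b \<le> max 1 t"
proof -
  define T where "T = max 1 t"
  define D where "D = f 0 + C"
  have "1 \<le> T" "0 < D"
    using nonneg[of 0] \<open>0 < C\<close> unfolding T_def D_def by auto
  have term_bound: "f k \<le> D * T ^ n" if "k \<le> n" for k n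
  proof (cases "k = 0")
    case True
    have "D \<le> D * T ^ n"
      using \<open>0 < D\<close> \<open>1 \<le> T\<close> by simp
    then show ?thesis
      using True \<open>0 < C\<close> unfolding D_def by simp
  next
    case False
    have "t ^ k \<le> T ^ k"
      unfolding T_def using \<open>0 \<le> t\<close> by (intro power_mono) auto
    then have "f k \<le> C * T ^ k"
      using bound[of k] False mult_left_mono[of "t ^ k" "T ^ k" C] \<open>0 < C\<close> by linarith
    also have "\<dots> \<le> D * T ^ n"
      using that \<open>1 \<le> T\<close> \<open>0 < C\<close> nonneg[of 0] unfolding D_def
      by (intro mult_mono power_increasing) auto
    finally show ?thesis .
  qed
  have upper_lim: "(\<lambda>n. ((real n + 1) * D) powr (1 / real n) * T) \<longlonglongrightarrow> 1 * T"
    using \<open>0 < D\<close> by (intro tendsto_mult tendsto_const) real_asymp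
  have below: "\<forall>\<^sub>F n in sequentially. (\<Sum>k\<le>n. f k) powr (1 / real n) \<le> ((real n + 1) * D) powr (1 / real n) * T"
    using eventually_ge_at_top[of 1]
  proof eventually_elim
    case (elim n)
    have "(\<Sum>k\<le>n. f k) \<le> (\<Sum>k\<le>n. D * T ^ n)"
      by (intro sum_mono term_bound) auto
    also have "\<dots> = (real n + 1) * D * T ^ n"
      by (simp add: algebra_simps)
    finally have "(\<Sum>k\<le>n. f k) powr (1 / real n) \<le> ((real n + 1) * D * T ^ n) powr (1 / real n)"
      using nonneg by (intro powr_mono2 sum_nonneg) auto
    also have "\<dots> = ((real n + 1) * D) powr (1 / real n) * T"
      using \<open>0 < D\<close> \<open>1 \<le> T\<close> elim by (simp add: powr_mult powr_realpow[symmetric] powr_powr)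
    finally show ?case .
  qed
  show ?thesis
    using tendsto_le[OF trivial_limit_sequentially upper_lim lim below] unfolding T_def by simp
qed

lemma submultiplicative_root_partial_sums_limit_le:
  fixes f :: "nat \<Rightarrow> real"
  assumes nonneg: "\<And>n. 0 \<le> f n"
    and submult: "\<And>n m. 1 \<le> n \<Longrightarrow> 1 \<le> m \<Longrightarrow> f (n + m) \<le> f n * f m"
    and lim: "(\<lambda>n. (\<Sum>k\<le>n. f k) powr (1 / real n)) \<longlonglongrightarrow> b"
  shows "b \<le> max 1 (INF n\<in>{1..}. f n powr (1 / real n))" (is "_ \<le> max 1 ?s")
proof (rule field_le_epsilon)
  fix \<epsilon> :: real
  assume "0 < \<epsilon>"
  then have "?s < ?s + \<epsilon>"
    by simp
  from submultiplicative_bound_below_Inf_root[OF nonneg submult this]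
  obtain C where "C > 0" and bound: "\<forall>n\<ge>1. f n \<le> C * (?s + \<epsilon>) ^ n"
    by blast
  have "0 \<le> ?s"
    by (intro cINF_greatest) auto
  have "b \<le> max 1 (?s + \<epsilon>)"
    by (rule root_partial_sums_limit_le[OF nonneg _ \<open>C > 0\<close> _ lim])
      (use bound \<open>0 \<le> ?s\<close> \<open>0 < \<epsilon>\<close> in auto)
  then show "b \<le> max 1 ?s + \<epsilon>"
    using \<open>0 < \<epsilon>\<close> by (auto simp: max_def split: if_splits)
qed

definition supp_prod :: "('i \<Rightarrow> 'i \<Rightarrow> 'i \<Rightarrow> nat) \<Rightarrow> 'i set \<Rightarrow> 'i set \<Rightarrow> 'i set" where
  "supp_prod N A B = {c. \<exists>a\<in>A. \<exists>b\<in>B. 0 < N c a b}"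

lemma supp_basis [simp]: "supp (basis a) = {a}"
  by (auto simp: supp_def basis_def)

lemma fmult_basis_left: "fmult N (basis x) r a = (\<Sum>y\<in>supp r. r y * int (N a x y))"
  unfolding fmult_def supp_basis by (simp add: basis_def)

lemma word_prod_nonneg: "0 \<le> word_prod N e xs a"
proof (induction xs arbitrary: a)
  case Nil
  show ?case
    by (simp add: basis_def)
next
  case (Cons x xs)
  then show ?case
    by (simp add: fmult_basis_left sum_nonneg)
qed

lemma supp_fmult_basis_left:
  assumes "finite (supp r)" and "\<And>y. 0 \<le> r y"
  shows "supp (fmult N (basis x) r) = supp_prod N {x} (supp r)"
proof (rule set_eqI)
  fix a
  have "a \<in> supp (fmult N (basis x) r) \<longleftrightarrow> \<not> (\<forall>y\<in>supp r. r y * int (N a x y) = 0)"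
    unfolding supp_def[of "fmult N (basis x) r"] fmult_basis_left
    using assms by (subst sum_nonneg_eq_0_iff) auto
  also have "\<dots> \<longleftrightarrow> a \<in> supp_prod N {x} (supp r)"
    by (auto simp: supp_prod_def supp_def)
  finally show "a \<in> supp (fmult N (basis x) r) \<longleftrightarrow> a \<in> supp_prod N {x} (supp r)" .
qed

lemma dsize_nonneg: "0 \<le> dsize d A"
  by (simp add: dsize_def sum_nonneg)

lemma dsize_mono: "finite B \<Longrightarrow> A \<subseteq> B \<Longrightarrow> dsize d A \<le> dsize d B"
  unfolding dsize_def by (intro sum_mono2) auto

definition reachable :: "('i \<Rightarrow> 'i \<Rightarrow> 'i \<Rightarrow> nat) \<Rightarrow> 'i \<Rightarrow> 'i set \<Rightarrow> 'i \<Rightarrow> nat \<Rightarrow> bool" where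
  "reachable N e X a n \<longleftrightarrow> (\<exists>xs. length xs = n \<and> set xs \<subseteq> X \<and> a \<in> supp (word_prod N e xs))"

lemma reachable_0_iff: "reachable N e X a 0 \<longleftrightarrow> a = e"
  by (simp add: reachable_def)

lemma word_length_eq_Least: "word_length e N X a = (LEAST n. reachable N e X a n)"
proof (cases "a = e")
  case True
  then show ?thesis
    using reachable_0_iff[of N e X a] by (simp add: word_length_def)
next
  case False
  then have "(1 \<le> n \<and> reachable N e X a n) \<longleftrightarrow> reachable N e X a n" for n
    using reachable_0_iff[of N e X a] by (cases n) auto
  then show ?thesis
    using False unfolding word_length_def reachable_def[symmetric] by simp
qed

lemma word_length_le: "reachable N e X a n \<Longrightarrow> word_length e N X a \<le> n"
  unfolding word_length_eq_Least by (rule Least_le)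

lemma sphere_X_subset_ball_X: "sphere_X I e N X n \<subseteq> ball_X I e N X n"
  unfolding sphere_X_def ball_X_def by auto

context
  fixes I :: "'i set" and e :: 'i and bar :: "'i \<Rightarrow> 'i"
    and N :: "'i \<Rightarrow> 'i \<Rightarrow> 'i \<Rightarrow> nat" and d :: "'i \<Rightarrow> real"
  assumes fusion: "fusion_algebra I e bar N d"
begin

lemma fusion_unit_mem: "e \<in> I"
  using fusion unfolding fusion_algebra_def by blast

lemma fusion_struct_const_mem: "N a x y \<noteq> 0 \<Longrightarrow> a \<in> I \<and> x \<in> I \<and> y \<in> I"
  using fusion unfolding fusion_algebra_def by blast

lemma fusion_finite_struct_support: "finite {a. N a x y \<noteq> 0}"
proof (cases "x \<in> I \<and> y \<in> I")
  case True
  then show ?thesis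
    using fusion unfolding fusion_algebra_def by blast
next
  case False
  then show ?thesis
    using fusion_struct_const_mem by (metis (mono_tags) Collect_empty_eq finite.emptyI)
qed

lemma fusion_unit_left: "a \<in> I \<Longrightarrow> x \<in> I \<Longrightarrow> N a e x = (if a = x then 1 else 0)"
  using fusion unfolding fusion_algebra_def by blast

lemma fusion_assoc:
  "a \<in> I \<Longrightarrow> x \<in> I \<Longrightarrow> y \<in> I \<Longrightarrow> z \<in> I \<Longrightarrow>
   (\<Sum>b\<in>{b. N b x y \<noteq> 0}. N b x y * N a b z) = (\<Sum>b\<in>{b. N b y z \<noteq> 0}. N a x b * N b y z)"
  using fusion unfolding fusion_algebra_def by blast

lemma fusion_dim_mult:
  "x \<in> I \<Longrightarrow> y \<in> I \<Longrightarrow> d x * d y = (\<Sum>a\<in>{a. N a x y \<noteq> 0}. real (N a x y) * d a)"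
  using fusion unfolding fusion_algebra_def by blast

lemma fusion_dim_ge_one: "a \<in> I \<Longrightarrow> 1 \<le> d a"
  using fusion unfolding fusion_algebra_def by blast

lemma supp_prod_subset: "supp_prod N A B \<subseteq> I"
  using fusion_struct_const_mem by (auto simp: supp_prod_def)

lemma finite_supp_prod:
  assumes "finite A" "finite B"
  shows "finite (supp_prod N A B)"
proof (rule finite_subset)
  show "supp_prod N A B \<subseteq> (\<Union>a\<in>A. \<Union>b\<in>B. {c. N c a b \<noteq> 0})"
    by (auto simp: supp_prod_def)
  show "finite (\<Union>a\<in>A. \<Union>b\<in>B. {c. N c a b \<noteq> 0})"
    using assms fusion_finite_struct_support by blast
qed

lemma supp_prod_unit_left:
  assumes "A \<subseteq> I"
  shows "supp_prod N {e} A = A"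
proof (rule set_eqI)
  fix c
  have "0 < N c e b \<longleftrightarrow> c = b" if "b \<in> A" for b
    using that assms fusion_unit_left[of c b] fusion_struct_const_mem[of c e b]
    by (auto split: if_split_asm)
  then show "c \<in> supp_prod N {e} A \<longleftrightarrow> c \<in> A"
    by (auto simp: supp_prod_def)
qed

lemma ex_struct_const_assoc:
  "(\<exists>m. 0 < N m a b \<and> 0 < N c m z) \<longleftrightarrow> (\<exists>m. 0 < N c a m \<and> 0 < N m b z)"
proof (cases "a \<in> I \<and> b \<in> I \<and> c \<in> I \<and> z \<in> I")
  case True
  have "(\<exists>m. 0 < N m a b \<and> 0 < N c m z) \<longleftrightarrow> (\<Sum>m\<in>{m. N m a b \<noteq> 0}. N m a b * N c m z) \<noteq> 0"
    using fusion_finite_struct_support by (subst sum_eq_0_iff) auto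
  also have "(\<Sum>m\<in>{m. N m a b \<noteq> 0}. N m a b * N c m z) = (\<Sum>m\<in>{m. N m b z \<noteq> 0}. N c a m * N m b z)"
    using True by (intro fusion_assoc) auto
  also have "\<dots> \<noteq> 0 \<longleftrightarrow> (\<exists>m. 0 < N c a m \<and> 0 < N m b z)"
    using fusion_finite_struct_support by (subst sum_eq_0_iff) auto
  finally show ?thesis .
next
  case False
  then show ?thesis
    using fusion_struct_const_mem by (metis not_gr0)
qed

lemma supp_prod_assoc: "supp_prod N (supp_prod N A B) C = supp_prod N A (supp_prod N B C)"
  using ex_struct_const_assoc unfolding supp_prod_def by blast

lemma finite_supp_word_prod: "finite (supp (word_prod N e xs))"
proof (induction xs)
  case (Cons x xs)
  then show ?case
    using supp_fmult_basis_left[OF Cons word_prod_nonneg] finite_supp_prod by simp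
qed simp

lemma supp_word_prod_Cons: "supp (word_prod N e (x # xs)) = supp_prod N {x} (supp (word_prod N e xs))"
  using supp_fmult_basis_left[OF finite_supp_word_prod word_prod_nonneg] by simp

lemma supp_word_prod_subset: "supp (word_prod N e xs) \<subseteq> I"
  by (cases xs) (simp add: fusion_unit_mem, simp only: supp_word_prod_Cons supp_prod_subset)

lemma supp_word_prod_append:
  "supp (word_prod N e (u @ v)) = supp_prod N (supp (word_prod N e u)) (supp (word_prod N e v))"
proof (induction u)
  case Nil
  show ?case
    using supp_prod_unit_left[OF supp_word_prod_subset] by simp
next
  case (Cons x u)
  then show ?case
    by (simp only: append_Cons supp_word_prod_Cons supp_prod_assoc)
qed

lemma reachable_split:
  assumes "reachable N e X a (n + m)"
  obtains \<alpha> \<beta> where "reachable N e X \<alpha> n" "reachable N e X \<beta> m" "0 < N a \<alpha> \<beta>"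
proof -
  obtain xs where xs: "length xs = n + m" "set xs \<subseteq> X" "a \<in> supp (word_prod N e (take n xs @ drop n xs))"
    using assms unfolding reachable_def by auto
  then obtain \<alpha> \<beta> where \<alpha>: "\<alpha> \<in> supp (word_prod N e (take n xs))"
    and \<beta>: "\<beta> \<in> supp (word_prod N e (drop n xs))" and "0 < N a \<alpha> \<beta>"
    unfolding supp_word_prod_append supp_prod_def by blast
  moreover have "reachable N e X \<alpha> n"
    unfolding reachable_def using xs \<alpha> set_take_subset[of n xs] by (intro exI[of _ "take n xs"]) auto
  moreover have "reachable N e X \<beta> m"
    unfolding reachable_def using xs \<beta> set_drop_subset[of n xs] by (intro exI[of _ "drop n xs"]) auto
  ultimately show ?thesis
    using that by blast
qed

lemma reachable_mult:
  assumes "reachable N e X \<alpha> n" "reachable N e X \<beta> m" "0 < N a \<alpha> \<beta>"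
  shows "reachable N e X a (n + m)"
proof -
  obtain u v where "length u = n" "set u \<subseteq> X" "\<alpha> \<in> supp (word_prod N e u)"
    and "length v = m" "set v \<subseteq> X" "\<beta> \<in> supp (word_prod N e v)"
    using assms(1,2) unfolding reachable_def by blast
  then have "a \<in> supp (word_prod N e (u @ v))"
    using assms(3) unfolding supp_word_prod_append supp_prod_def by blast
  then show ?thesis
    unfolding reachable_def using \<open>length u = n\<close> \<open>length v = m\<close> \<open>set u \<subseteq> X\<close> \<open>set v \<subseteq> X\<close>
    by (intro exI[of _ "u @ v"]) auto
qed

lemma fusion_dim_le_mult:
  assumes "N c a b \<noteq> 0"
  shows "d c \<le> d a * d b"
proof -
  have "a \<in> I" "b \<in> I" "c \<in> I"
    using fusion_struct_const_mem assms by auto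
  have "d c \<le> real (N c a b) * d c"
    using assms fusion_dim_ge_one[OF \<open>c \<in> I\<close>] by simp
  also have "\<dots> \<le> (\<Sum>c'\<in>{c. N c a b \<noteq> 0}. real (N c' a b) * d c')"
    using assms fusion_finite_struct_support fusion_struct_const_mem fusion_dim_ge_one
    by (intro member_le_sum) fastforce+
  also have "\<dots> = d a * d b"
    using fusion_dim_mult \<open>a \<in> I\<close> \<open>b \<in> I\<close> by simp
  finally show ?thesis .
qed

text \<open>Weight every constituent \<open>c\<close> of \<open>a b\<close> by \<open>N c a b d c \<ge> d c\<close> and use
  \<open>d c \<le> d a d b\<close>; the weighted sum is \<open>d a d b\<close> by multiplicativity of \<open>d\<close>.\<close>
lemma sum_dim_sq_constituents_le:
  "(\<Sum>c\<in>{c. N c a b \<noteq> 0}. d c ^ 2) \<le> d a ^ 2 * d b ^ 2"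
proof (cases "a \<in> I \<and> b \<in> I")
  case True
  have "(\<Sum>c\<in>{c. N c a b \<noteq> 0}. d c ^ 2) \<le> (\<Sum>c\<in>{c. N c a b \<noteq> 0}. real (N c a b) * d c * (d a * d b))"
  proof (intro sum_mono)
    fix c
    assume c: "c \<in> {c. N c a b \<noteq> 0}"
    then have "1 \<le> d c"
      using fusion_struct_const_mem fusion_dim_ge_one by blast
    then show "d c ^ 2 \<le> real (N c a b) * d c * (d a * d b)"
      using c fusion_dim_le_mult[of c a b] unfolding power2_eq_square
      by (intro mult_mono) (auto simp: mult_le_cancel_right1)
  qed
  also have "\<dots> = (d a * d b) ^ 2"
    using fusion_dim_mult True by (simp add: sum_distrib_right power2_eq_square)
  finally show ?thesis
    by (simp add: power_mult_distrib)
next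
  case False
  then have "{c. N c a b \<noteq> 0} = {}"
    using fusion_struct_const_mem by blast
  then show ?thesis
    by simp
qed

lemma dsize_subset_supp_prod_le:
  assumes "finite A" "finite B" "finite T" "T \<subseteq> supp_prod N A B"
  shows "dsize d T \<le> dsize d A * dsize d B"
proof -
  let ?w = "\<lambda>a b c. if 0 < N c a b then d c ^ 2 else 0"
  have "d c ^ 2 \<le> (\<Sum>a\<in>A. \<Sum>b\<in>B. ?w a b c)" if c: "c \<in> T" for c
  proof -
    obtain a b where "a \<in> A" "b \<in> B" "0 < N c a b"
      using c assms(4) unfolding supp_prod_def by blast
    then have "d c ^ 2 = ?w a b c"
      by simp
    also have "\<dots> \<le> (\<Sum>b\<in>B. ?w a b c)"
      using \<open>b \<in> B\<close> assms(2) by (intro member_le_sum) auto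
    also have "\<dots> \<le> (\<Sum>a\<in>A. \<Sum>b\<in>B. ?w a b c)"
      using \<open>a \<in> A\<close> assms(1) by (intro member_le_sum sum_nonneg) auto
    finally show ?thesis .
  qed
  then have "dsize d T \<le> (\<Sum>c\<in>T. \<Sum>a\<in>A. \<Sum>b\<in>B. ?w a b c)"
    unfolding dsize_def by (intro sum_mono)
  also have "\<dots> = (\<Sum>a\<in>A. \<Sum>b\<in>B. \<Sum>c\<in>T. ?w a b c)"
    by (subst sum.swap) (simp add: sum.swap[of _ T])
  also have "\<dots> \<le> (\<Sum>a\<in>A. \<Sum>b\<in>B. d a ^ 2 * d b ^ 2)"
  proof (intro sum_mono)
    fix a b
    have "(\<Sum>c\<in>T. ?w a b c) = (\<Sum>c\<in>{c\<in>T. 0 < N c a b}. d c ^ 2)"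
      using assms(3) by (simp add: sum.inter_filter)
    also have "\<dots> \<le> (\<Sum>c\<in>{c. N c a b \<noteq> 0}. d c ^ 2)"
      using fusion_finite_struct_support by (intro sum_mono2) auto
    also have "\<dots> \<le> d a ^ 2 * d b ^ 2"
      by (rule sum_dim_sq_constituents_le)
    finally show "(\<Sum>c\<in>T. ?w a b c) \<le> d a ^ 2 * d b ^ 2" .
  qed
  also have "\<dots> = dsize d A * dsize d B"
    unfolding dsize_def by (simp add: sum_product)
  finally show ?thesis .
qed

end

context
  fixes I :: "'i set" and e :: 'i and bar :: "'i \<Rightarrow> 'i"
    and N :: "'i \<Rightarrow> 'i \<Rightarrow> 'i \<Rightarrow> nat" and d :: "'i \<Rightarrow> real" and X :: "'i set"
  assumes fusion: "fusion_algebra I e bar N d"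
    and generating: "finite_generating_set I e bar N X"
begin

lemma reachable_word_length:
  assumes "a \<in> I"
  shows "reachable N e X a (word_length e N X a)"
proof -
  obtain xs where "set xs \<subseteq> X" "a \<in> supp (word_prod N e xs)"
    using generating assms unfolding finite_generating_set_def by blast
  then have "reachable N e X a (length xs)"
    unfolding reachable_def by blast
  then show ?thesis
    unfolding word_length_eq_Least by (rule LeastI)
qed

lemma word_length_mult_le:
  assumes "0 < N a \<alpha> \<beta>"
  shows "word_length e N X a \<le> word_length e N X \<alpha> + word_length e N X \<beta>"
proof -
  have "\<alpha> \<in> I" "\<beta> \<in> I"
    using fusion_struct_const_mem[OF fusion, of a \<alpha> \<beta>] assms by auto
  then have "reachable N e X a (word_length e N X \<alpha> + word_length e N X \<beta>)"
    using reachable_mult[OF fusion reachable_word_length reachable_word_length assms] by blast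
  then show ?thesis
    by (rule word_length_le)
qed

lemma finite_ball_X: "finite (ball_X I e N X n)"
proof (rule finite_subset)
  show "ball_X I e N X n \<subseteq> (\<Union>xs\<in>{xs. set xs \<subseteq> X \<and> length xs \<le> n}. supp (word_prod N e xs))"
  proof
    fix a
    assume "a \<in> ball_X I e N X n"
    then have "a \<in> I" "word_length e N X a \<le> n"
      by (auto simp: ball_X_def)
    then show "a \<in> (\<Union>xs\<in>{xs. set xs \<subseteq> X \<and> length xs \<le> n}. supp (word_prod N e xs))"
      using reachable_word_length[OF \<open>a \<in> I\<close>] unfolding reachable_def by auto
  qed
  show "finite (\<Union>xs\<in>{xs. set xs \<subseteq> X \<and> length xs \<le> n}. supp (word_prod N e xs))"
    using generating finite_supp_word_prod[OF fusion]
    by (auto simp: finite_generating_set_def intro: finite_lists_length_le)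
qed

lemma finite_sphere_X: "finite (sphere_X I e N X n)"
  using finite_ball_X sphere_X_subset_ball_X by (rule finite_subset[rotated])

lemma ball_X_add_subset: "ball_X I e N X (n + m) \<subseteq> supp_prod N (ball_X I e N X n) (ball_X I e N X m)"
proof
  fix a
  assume "a \<in> ball_X I e N X (n + m)"
  then have "a \<in> I" and length_a: "word_length e N X a \<le> n + m"
    unfolding ball_X_def by auto
  define k where "k = min n (word_length e N X a)"
  have "reachable N e X a (k + (word_length e N X a - k))"
    using reachable_word_length[OF \<open>a \<in> I\<close>] unfolding k_def by simp
  then obtain \<alpha> \<beta> where "reachable N e X \<alpha> k" "reachable N e X \<beta> (word_length e N X a - k)"
    and "0 < N a \<alpha> \<beta>"
    by (rule reachable_split[OF fusion])
  moreover have "\<alpha> \<in> I" "\<beta> \<in> I"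
    using fusion_struct_const_mem[OF fusion, of a \<alpha> \<beta>] \<open>0 < N a \<alpha> \<beta>\<close> by auto
  moreover have "word_length e N X \<alpha> \<le> n" "word_length e N X \<beta> \<le> m"
    using word_length_le[OF \<open>reachable N e X \<alpha> k\<close>]
      word_length_le[OF \<open>reachable N e X \<beta> (word_length e N X a - k)\<close>] length_a
    unfolding k_def by auto
  ultimately show "a \<in> supp_prod N (ball_X I e N X n) (ball_X I e N X m)"
    unfolding supp_prod_def ball_X_def by blast
qed

lemma sphere_X_add_subset:
  "sphere_X I e N X (n + m) \<subseteq> supp_prod N (sphere_X I e N X n) (sphere_X I e N X m)"
proof
  fix a
  assume "a \<in> sphere_X I e N X (n + m)"
  then have "a \<in> I" and length_a: "word_length e N X a = n + m"
    unfolding sphere_X_def by auto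
  then obtain \<alpha> \<beta> where "reachable N e X \<alpha> n" "reachable N e X \<beta> m" and "0 < N a \<alpha> \<beta>"
    using reachable_word_length[OF \<open>a \<in> I\<close>] by (auto elim: reachable_split[OF fusion])
  moreover have "\<alpha> \<in> I" "\<beta> \<in> I"
    using fusion_struct_const_mem[OF fusion, of a \<alpha> \<beta>] \<open>0 < N a \<alpha> \<beta>\<close> by auto
  moreover have "word_length e N X \<alpha> = n" "word_length e N X \<beta> = m"
    using word_length_le[OF \<open>reachable N e X \<alpha> n\<close>] word_length_le[OF \<open>reachable N e X \<beta> m\<close>]
      word_length_mult_le[OF \<open>0 < N a \<alpha> \<beta>\<close>] length_a by auto
  ultimately show "a \<in> supp_prod N (sphere_X I e N X n) (sphere_X I e N X m)"
    unfolding supp_prod_def sphere_X_def by blast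
qed

lemma dsize_ball_X_add_le:
  "dsize d (ball_X I e N X (n + m)) \<le> dsize d (ball_X I e N X n) * dsize d (ball_X I e N X m)"
  by (intro dsize_subset_supp_prod_le[OF fusion] finite_ball_X ball_X_add_subset)

lemma dsize_sphere_X_add_le:
  "dsize d (sphere_X I e N X (n + m)) \<le> dsize d (sphere_X I e N X n) * dsize d (sphere_X I e N X m)"
  by (intro dsize_subset_supp_prod_le[OF fusion] finite_sphere_X sphere_X_add_subset)

lemma dsize_ball_X_eq_sum: "dsize d (ball_X I e N X n) = (\<Sum>k\<le>n. dsize d (sphere_X I e N X k))"
proof -
  have ball_eq: "ball_X I e N X n = (\<Union>k\<le>n. sphere_X I e N X k)"
    unfolding ball_X_def sphere_X_def by auto
  show ?thesis
    unfolding dsize_def ball_eq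
  proof (rule sum.UNION_disjoint)
    show "\<forall>k\<in>{..n}. finite (sphere_X I e N X k)"
      using finite_sphere_X by blast
    show "\<forall>i\<in>{..n}. \<forall>j\<in>{..n}. i \<noteq> j \<longrightarrow> sphere_X I e N X i \<inter> sphere_X I e N X j = {}"
      by (auto simp: sphere_X_def)
  qed simp
qed

lemma one_le_dsize_ball_X: "1 \<le> dsize d (ball_X I e N X n)"
proof -
  have "e \<in> ball_X I e N X n"
    using fusion_unit_mem[OF fusion] by (simp add: ball_X_def word_length_def)
  then have "d e ^ 2 \<le> dsize d (ball_X I e N X n)"
    unfolding dsize_def using finite_ball_X by (intro member_le_sum) auto
  moreover have "1 \<le> d e ^ 2"
    using fusion_dim_ge_one[OF fusion fusion_unit_mem[OF fusion]] by simp
  ultimately show ?thesis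
    by linarith
qed

end

theorem lemma3p12:
  fixes I :: "'i set" and e :: 'i and bar :: "'i \<Rightarrow> 'i"
    and N :: "'i \<Rightarrow> 'i \<Rightarrow> 'i \<Rightarrow> nat" and d :: "'i \<Rightarrow> real" and X :: "'i set"
  assumes "fusion_algebra I e bar N d"
    and "finite_generating_set I e bar N X"
  shows "growth_rate I e N d X
           = max 1 (lim (\<lambda>n. dsize d (sphere_X I e N X n) powr (1 / real n)))"
proof -
  let ?S = "\<lambda>n. dsize d (sphere_X I e N X n)" and ?B = "\<lambda>n. dsize d (ball_X I e N X n)"
  define s where "s = (INF n\<in>{1..}. ?S n powr (1 / real n))"
  define b where "b = (INF n\<in>{1..}. ?B n powr (1 / real n))"
  have S_lim: "(\<lambda>n. ?S n powr (1 / real n)) \<longlonglongrightarrow> s"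
    unfolding s_def using dsize_sphere_X_add_le[OF assms]
    by (intro submultiplicative_root_tendsto_Inf dsize_nonneg)
  have B_lim: "(\<lambda>n. ?B n powr (1 / real n)) \<longlonglongrightarrow> b"
    unfolding b_def using dsize_ball_X_add_le[OF assms]
    by (intro submultiplicative_root_tendsto_Inf dsize_nonneg)
  have "1 \<le> b"
  proof (rule LIMSEQ_le_const[OF B_lim], intro exI allI impI)
    fix n
    show "1 \<le> ?B n powr (1 / real n)"
      using one_le_dsize_ball_X[OF assms] by (rule ge_one_powr_ge_zero) simp
  qed
  moreover have "s \<le> b"
  proof (rule LIMSEQ_le[OF S_lim B_lim], intro exI allI impI)
    fix n
    show "?S n powr (1 / real n) \<le> ?B n powr (1 / real n)"
      using finite_ball_X[OF assms] sphere_X_subset_ball_X[of I e N X n]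
      by (intro powr_mono2 dsize_nonneg dsize_mono) auto
  qed
  moreover have "b \<le> max 1 s"
    unfolding s_def using B_lim dsize_sphere_X_add_le[OF assms]
    by (intro submultiplicative_root_partial_sums_limit_le dsize_nonneg)
      (simp_all add: dsize_ball_X_eq_sum[OF assms])
  ultimately show ?thesis
    using limI[OF B_lim] limI[OF S_lim] by (simp add: growth_rate_def)
qed

end
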